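(* Let $r$ be odd with $1\le r\le n$. If $\mathbf{x}_1,\ldots,\mathbf{x}_r\in\mathbb{F}_2^n$ and both $A$ and $A+\sum_{i=1}^r\mathbf{x}_i\mathbf{x}_i^{\top}$ lie in $\mathrm{SGL}_n(\mathbb{F}_2)$, then $\mathbf{x}_i^{\top}A^{-1}\mathbf{x}_i=0$ for some $i$.
   Context: $\mathrm{SGL}_n(\mathbb{F}_2)$ is the set of invertible symmetric $n\times n$ matrices over the binary field $\mathbb{F}_2$. *)

theory Defs
  imports "HOL-Analysis.Analysis" "HOL-Library.Z2"
begin

text \<open>Matrices over the binary field F_2 (type bit); dimension n = CARD('n).\<close>

definition SGL :: "(bit ^ 'n ^ 'n) set" where
  "SGL = {A. transpose A = A \<and> invertible A}"

definition outer :: "bit ^ 'n \<Rightarrow> bit ^ 'n ^ 'n" where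
  "outer x = (\<chi> i j. x $ i * x $ j)"

end

theory Submission
  imports Defs "HOL-Library.Disjoint_Sets" "Jordan_Normal_Form.Determinant"
begin

text \<open>
  Suppose every \<open>x\<^sub>i\<^sup>T A\<inverse> x\<^sub>i\<close> equals 1. Then the \<open>r \<times> r\<close> matrix \<open>I + G\<close>, where
  \<open>G\<^sub>i\<^sub>j = x\<^sub>i\<^sup>T A\<inverse> x\<^sub>j\<close>, is symmetric with zero diagonal over \<open>F\<^sub>2\<close>, and such a matrix of
  odd order is singular: in the Leibniz expansion the terms of \<open>p\<close> and \<open>p\<inverse>\<close> cancel, and
  every involution of an odd set has a fixed point, whose diagonal factor vanishes.
  A nonzero kernel vector \<open>c\<close> of \<open>I + G\<close> yields \<open>v = A\<inverse> \<Sum> c\<^sub>j x\<^sub>j\<close> with \<open>x\<^sub>i\<^sup>T v = c\<^sub>i\<close>,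
  hence \<open>(A + \<Sum> x\<^sub>i x\<^sub>i\<^sup>T) v = 0\<close> with \<open>v \<noteq> 0\<close>, contradicting invertibility.
\<close>

lemma bit_add_eq_0_iff: "(a::bit) + b = 0 \<longleftrightarrow> a = b"
  by (cases a; cases b) simp_all

lemma involution_odd_card_has_fixpoint:
  assumes "odd (card X)"
    and "\<And>x. x \<in> X \<Longrightarrow> h x \<in> X" "\<And>x. x \<in> X \<Longrightarrow> h (h x) = x"
  shows "\<exists>x\<in>X. h x = x"
proof (rule ccontr)
  assume no_fixpoint: "\<not> (\<exists>x\<in>X. h x = x)"
  have "(\<Sum>x\<in>X. 1 :: bit) = 0"
    by (rule sum_involution_eq_0[where h = h]) (use assms(2,3) no_fixpoint in auto)
  moreover have "(\<Sum>x\<in>X. 1 :: bit) = 1"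
    using assms(1) by (simp, elim oddE, simp)
  ultimately show False by simp
qed

(* Plain inv denotes the group inverse of HOL-Algebra in this context. *)
lemma prod_inv_permutation_symmetric:
  assumes p: "p permutes S" and sym: "\<And>i j. i \<in> S \<Longrightarrow> j \<in> S \<Longrightarrow> M i j = M j i"
  shows "(\<Prod>i\<in>S. M i (Hilbert_Choice.inv p i)) = (\<Prod>i\<in>S. M i (p i))"
proof -
  have "(\<Prod>i\<in>S. M i (Hilbert_Choice.inv p i))
      = (\<Prod>i\<in>S. M (p i) (Hilbert_Choice.inv p (p i)))"
    using prod.reindex_bij_betw[OF permutes_imp_bij[OF p], of "\<lambda>i. M i (Hilbert_Choice.inv p i)"]
    by simp
  also have "\<dots> = (\<Prod>i\<in>S. M i (p i))"
    using p sym by (intro prod.cong) (auto simp: permutes_in_image)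
  finally show ?thesis .
qed

lemma det_alternating_odd_dim:
  fixes M :: "bit mat"
  assumes M: "M \<in> carrier_mat n n" and "odd n"
    and sym: "\<And>i j. i < n \<Longrightarrow> j < n \<Longrightarrow> M $$ (i, j) = M $$ (j, i)"
    and diag: "\<And>i. i < n \<Longrightarrow> M $$ (i, i) = 0"
  shows "Determinant.det M = 0"
proof -
  let ?P = "{p. p permutes {0..<n}}"
  let ?f = "\<lambda>p. \<Prod>i = 0..<n. M $$ (i, p i)"
  have "signof p = (1 :: bit)" for p
    by (simp add: sign_def)
  then have "Determinant.det M = (\<Sum>p\<in>?P. ?f p)"
    by (simp only: det_def'[OF M] mult_1_left)
  also have "\<dots> = (\<Sum>p\<in>{p\<in>?P. Hilbert_Choice.inv p \<noteq> p}. ?f p)"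
  proof (rule sum.mono_neutral_right)
    show "\<forall>p\<in>?P - {p\<in>?P. Hilbert_Choice.inv p \<noteq> p}. ?f p = 0"
    proof
      fix p assume "p \<in> ?P - {p\<in>?P. Hilbert_Choice.inv p \<noteq> p}"
      then have p: "p permutes {0..<n}" and "Hilbert_Choice.inv p = p" by auto
      then have "\<exists>i\<in>{0..<n}. p i = i"
        using \<open>odd n\<close> by (intro involution_odd_card_has_fixpoint)
          (auto simp: permutes_in_image, metis permutes_inverses(2))
      then show "?f p = 0"
        using diag by (metis atLeastLessThan_iff finite_atLeastLessThan prod_zero)
    qed
  qed (auto simp: finite_permutations)
  also have "\<dots> = 0"
  proof (rule sum_involution_eq_0[where h = Hilbert_Choice.inv])
    fix p assume "p \<in> {p\<in>?P. Hilbert_Choice.inv p \<noteq> p}"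
    then have p: "p permutes {0..<n}" and "Hilbert_Choice.inv p \<noteq> p" by auto
    then show "Hilbert_Choice.inv p \<in> {p\<in>?P. Hilbert_Choice.inv p \<noteq> p}"
      and "Hilbert_Choice.inv (Hilbert_Choice.inv p) = p"
      and "Hilbert_Choice.inv p \<noteq> p"
      by (auto simp: permutes_inv permutes_inv_inv)
    have "?f (Hilbert_Choice.inv p) = ?f p"
      using sym by (intro prod_inv_permutation_symmetric[OF p]) auto
    then show "?f (Hilbert_Choice.inv p) + ?f p = 0" by simp
  qed
  finally show ?thesis .
qed

lemma alternating_odd_dim_kernel_nontrivial:
  fixes M :: "nat \<Rightarrow> nat \<Rightarrow> bit"
  assumes "odd n"
    and "\<And>i j. i < n \<Longrightarrow> j < n \<Longrightarrow> M i j = M j i" and "\<And>i. i < n \<Longrightarrow> M i i = 0"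
  shows "\<exists>c. (\<exists>j<n. c j \<noteq> 0) \<and> (\<forall>i<n. (\<Sum>j<n. M i j * c j) = 0)"
proof -
  let ?M = "mat n n (\<lambda>(i, j). M i j)"
  have "Determinant.det ?M = 0"
    by (rule det_alternating_odd_dim) (use assms in auto)
  then obtain v where v: "v \<in> carrier_vec n" "v \<noteq> 0\<^sub>v n" "?M *\<^sub>v v = 0\<^sub>v n"
    using det_0_iff_vec_prod_zero[of ?M n] by auto
  have "\<exists>j<n. vec_index v j \<noteq> 0"
    using v(1,2) by (metis eq_vecI carrier_vecD index_zero_vec(1,2))
  moreover have "(\<Sum>j<n. M i j * vec_index v j) = 0" if "i < n" for i
    using arg_cong[OF v(3), of "\<lambda>w. vec_index w i"] that v(1)
    by (simp add: scalar_prod_def atLeast0LessThan)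
  ultimately show ?thesis by blast
qed

no_notation vec_index (infixl "$" 100)
hide_const (open) Matrix.mat
hide_fact (open) Matrix.vec_eq_iff

lemma matrix_inv_right: "invertible A \<Longrightarrow> A ** matrix_inv A = mat 1"
  unfolding invertible_def matrix_inv_def by (metis (mono_tags, lifting) someI_ex)

lemma symmetric_matrix_inv:
  fixes A :: "'a::comm_semiring_1^'n^'n"
  assumes "transpose A = A" and "invertible A"
  shows "transpose (matrix_inv A) = matrix_inv A"
proof -
  have "transpose (matrix_inv A) ** A = transpose (transpose A ** matrix_inv A)"
    by (simp add: matrix_transpose_mul)
  also have "\<dots> = mat 1"
    using assms by (simp add: matrix_inv_right)
  finally have left_inverse: "transpose (matrix_inv A) ** A = mat 1" .
  have "transpose (matrix_inv A) = transpose (matrix_inv A) ** (A ** matrix_inv A)"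
    using assms(2) by (simp add: matrix_inv_right)
  also have "\<dots> = matrix_inv A"
    by (simp add: matrix_mul_assoc left_inverse)
  finally show ?thesis .
qed

lemma scalar_product_symmetric_matrix:
  fixes B :: "'a::comm_semiring_1^'n^'n"
  assumes "transpose B = B"
  shows "scalar_product u (B *v w) = scalar_product w (B *v u)"
proof -
  have B: "B $ i $ j = B $ j $ i" for i j
    using arg_cong[OF assms, of "\<lambda>X. X $ j $ i"] by (simp add: transpose_def)
  have "scalar_product u (B *v w) = (\<Sum>i\<in>UNIV. \<Sum>j\<in>UNIV. u $ i * B $ i $ j * w $ j)"
    by (simp add: scalar_product_def matrix_vector_mult_def sum_distrib_left mult.assoc)
  also have "\<dots> = (\<Sum>j\<in>UNIV. \<Sum>i\<in>UNIV. u $ i * B $ i $ j * w $ j)"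
    by (rule sum.swap)
  also have "\<dots> = scalar_product w (B *v u)"
    by (simp add: scalar_product_def matrix_vector_mult_def sum_distrib_left B mult_ac)
  finally show ?thesis .
qed

lemma scalar_product_sum_right: "scalar_product u (sum f S) = (\<Sum>j\<in>S. scalar_product u (f j))"
  by (simp add: scalar_product_def sum_distrib_left sum.swap[of _ S])

lemma scalar_product_scale_right:
  "scalar_product u (a *s w) = (a::'a::comm_semiring_1) * scalar_product u w"
  by (simp add: scalar_product_def sum_distrib_left mult_ac)

lemma matrix_vector_mult_sum_right: "A *v sum f S = (\<Sum>j\<in>S. A *v f j)"
  by (simp add: vec_eq_iff matrix_vector_mult_def sum_distrib_left sum.swap[of _ S])

lemma sum_matrix_vector_mult: "sum f S *v v = (\<Sum>j\<in>S. f j *v v)"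
  by (simp add: vec_eq_iff matrix_vector_mult_def sum_distrib_right sum.swap[of _ S])

lemma outer_matrix_vector_mult: "outer x *v v = scalar_product x v *s x"
  by (simp add: outer_def vec_eq_iff matrix_vector_mult_def scalar_product_def
      sum_distrib_left mult_ac del: mult_bit_eq_and)

lemma invertible_update_gram_kernel_trivial:
  fixes A :: "bit^'n^'n" and x :: "nat \<Rightarrow> bit^'n" and c :: "nat \<Rightarrow> bit"
  assumes A: "invertible A" and B: "invertible (A + (\<Sum>i<r. outer (x i)))"
    and c: "\<And>i. i < r \<Longrightarrow> c i + (\<Sum>j<r. scalar_product (x i) (matrix_inv A *v x j) * c j) = 0"
  shows "\<forall>i<r. c i = 0"
proof -
  define w where "w = (\<Sum>j<r. c j *s x j)"
  define v where "v = matrix_inv A *v w"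
  have xv: "scalar_product (x i) v = c i" if "i < r" for i
  proof -
    have "scalar_product (x i) v = (\<Sum>j<r. scalar_product (x i) (matrix_inv A *v x j) * c j)"
      unfolding v_def w_def matrix_vector_mult_sum_right vector_scalar_commute
        scalar_product_sum_right scalar_product_scale_right
      by (simp only: mult.commute)
    with c[OF that] show ?thesis
      by (metis bit_add_eq_0_iff)
  qed
  have "A *v v = w"
    using A by (simp add: v_def matrix_vector_mul_assoc matrix_inv_right)
  then have "(A + (\<Sum>i<r. outer (x i))) *v v = w + (\<Sum>i<r. scalar_product (x i) v *s x i)"
    by (simp add: matrix_vector_mult_add_rdistrib sum_matrix_vector_mult outer_matrix_vector_mult)
  also have "\<dots> = w + w"
    using xv by (simp add: w_def)
  also have "\<dots> = 0"
    by (simp add: vec_eq_iff)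
  finally have "v = 0"
    using inj_matrix_vector_mult[OF B] by (metis injD matrix_vector_mult_0_right)
  then show ?thesis
    using xv by (simp add: scalar_product_def)
qed

theorem lemma3p4:
  fixes A :: "bit ^ 'n ^ 'n" and x :: "nat \<Rightarrow> bit ^ 'n" and r :: nat
  assumes "odd r" and "1 \<le> r" and "r \<le> CARD('n)"
    and "A \<in> SGL"
    and "A + (\<Sum>i\<in>{1..r}. outer (x i)) \<in> SGL"
  shows "\<exists>i\<in>{1..r}. scalar_product (x i) (matrix_inv A *v x i) = 0"
proof (rule ccontr)
  assume "\<not> ?thesis"
  then have diag: "scalar_product (x i) (matrix_inv A *v x i) = 1" if "i \<in> {1..r}" for i
    using that by auto
  define y where "y i = x (Suc i)" for i
  define G where "G i j = scalar_product (y i) (matrix_inv A *v y j)" for i j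
  have A: "transpose A = A" "invertible A"
    using assms(4) by (auto simp: SGL_def)
  have G_sym: "G i j = G j i" for i j
    unfolding G_def by (rule scalar_product_symmetric_matrix[OF symmetric_matrix_inv[OF A]])
  have G_diag: "G i i = 1" if "i < r" for i
    using diag[of "Suc i"] that by (simp add: G_def y_def)
  have "of_bool (i = j) + G i j = of_bool (j = i) + G j i" for i j
    by (simp only: G_sym eq_commute)
  moreover have "of_bool (i = i) + G i i = 0" if "i < r" for i
    using G_diag[OF that] by simp
  ultimately obtain c where c_nonzero: "\<exists>j<r. c j \<noteq> 0"
    and c_kernel: "\<forall>i<r. (\<Sum>j<r. (of_bool (i = j) + G i j) * c j) = 0"
    using alternating_odd_dim_kernel_nontrivial[OF assms(1), of "\<lambda>i j. of_bool (i = j) + G i j"]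
    by blast
  have "c i + (\<Sum>j<r. G i j * c j) = 0" if "i < r" for i
  proof -
    have delta: "(\<Sum>j<r. of_bool (i = j) * c j) = c i"
      using that by (simp del: mult_bit_eq_and)
    have "(\<Sum>j<r. (of_bool (i = j) + G i j) * c j) = 0"
      using c_kernel that by blast
    then show ?thesis
      unfolding distrib_right sum.distrib delta .
  qed
  moreover have "invertible (A + (\<Sum>i<r. outer (y i)))"
    using assms(5) by (simp add: SGL_def y_def sum.atLeast1_atMost_eq)
  ultimately have "\<forall>i<r. c i = 0"
    using invertible_update_gram_kernel_trivial[OF A(2)] unfolding G_def by blast
  with c_nonzero show False by auto
qed

end
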